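(* Let $C>0$ and $\delta>0$, let $f \in C((0,\infty);(0,\infty))$ be asymptotically increasing with $\lim_{x\to\infty} f(x)/x = \infty$, and let $\psi \in C([-\delta,0];(0,\infty))$. Suppose $f$ preserves superexponential growth, and let $z \in C([-\delta,\infty);(0,\infty))$ be a solution of \[ z'(t) = C\int_{t-\delta}^t f(z(s))\,ds, \quad t\ge 0; \qquad z(t)=\psi(t), \quad t\in[-\delta,0]. \] Then \[ \lim_{t\to\infty} \frac{F_U(z(t))}{t} = \sqrt{2C}, \] where $F_U(x) = \int_1^x \frac{du}{\sqrt{\int_0^u f(s)\,ds}}$ for $x>0$.
   Context: "$f$ is asymptotically increasing" means that there is a continuous increasing function $\phi:(0,\infty)\to(0,\infty)$ with $f(x)/\phi(x)\to 1$ as $x\to\infty$. A function $g \in C((0,\infty);(0,\infty))$ exhibits superexponential growth if $g(x)\to\infty$ as $x\to\infty$ and $\lim_{x\to\infty} g(x-\epsilon)/g(x) = 0$ for each $\epsilon>0$. A function $\phi \in C((0,\infty);(0,\infty))$ preserves superexponential growth if for every $g$ exhibiting superexponential growth and every $\epsilon>0$, $\lim_{x\to\infty}\phi(g(x-\epsilon))/\phi(g(x)) = 0$. *)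

theory Defs
  imports "HOL-Analysis.Analysis"
begin

definition asymp_increasing :: "(real \<Rightarrow> real) \<Rightarrow> bool" where
  "asymp_increasing f \<longleftrightarrow>
     (\<exists>\<phi>. continuous_on {0<..} \<phi> \<and> (\<forall>x>0. \<phi> x > 0) \<and>
          strict_mono_on {0<..} \<phi> \<and>
          ((\<lambda>x. f x / \<phi> x) \<longlongrightarrow> 1) at_top)"

definition superexp_growth :: "(real \<Rightarrow> real) \<Rightarrow> bool" where
  "superexp_growth g \<longleftrightarrow>
     continuous_on {0<..} g \<and> (\<forall>x>0. g x > 0) \<and>
     filterlim g at_top at_top \<and>
     (\<forall>\<epsilon>>0. ((\<lambda>x. g (x - \<epsilon>) / g x) \<longlongrightarrow> 0) at_top)"

definition preserves_superexp :: "(real \<Rightarrow> real) \<Rightarrow> bool" where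
  "preserves_superexp \<phi> \<longleftrightarrow>
     (\<forall>g \<epsilon>. superexp_growth g \<and> \<epsilon> > 0 \<longrightarrow>
        ((\<lambda>x. \<phi> (g (x - \<epsilon>)) / \<phi> (g x)) \<longlongrightarrow> 0) at_top)"

definition F_U :: "(real \<Rightarrow> real) \<Rightarrow> real \<Rightarrow> real" where
  "F_U f x = (let h = (\<lambda>u. 1 / sqrt (integral {0..u} f)) in
     if 1 \<le> x then integral {1..x} h else - integral {x..1} h)"

end

theory Submission
  imports Defs
begin

text \<open>
  Superlinearity of \<open>f\<close> makes the delayed term dominate: \<open>z\<close> increases, grows at least linearly, and
  then, for every \<open>K\<close>, eventually \<open>z t - z (t - a) \<ge> C a\<^sup>2 K z (t - 2a)\<close>, so \<open>z\<close> grows superexponentially. Since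
  \<open>f\<close> preserves such growth, \<open>f (z (t - \<delta>)) = o(f (z t))\<close>, and differentiating the equation gives
  \<open>z'' = C (f (z t) - f (z (t - \<delta>))) \<sim> C f (z t)\<close>. With \<open>\<Phi> u = \<integral>\<^sub>0\<^sup>u f\<close>, L'Hospital's rule yields
  \<open>z'\<^sup>2 \<sim> 2 C \<Phi> (z)\<close>; as \<open>(F_U f \<circ> z)' = z' / sqrt (\<Phi> (z))\<close>, a second application gives the limit.
\<close>

lemma integral_has_real_derivative_at:
  fixes g :: "real \<Rightarrow> real"
  assumes "continuous_on {a..b} g" "a < x" "x < b"
  shows "((\<lambda>y. integral {a..y} g) has_real_derivative g x) (at x)"
proof -
  have "((\<lambda>y. integral {a..y} g) has_real_derivative g x) (at x within {a..b})"
    using assms by (intro integral_has_real_derivative) auto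
  moreover have "at x within {a..b} = at x"
    using assms by (intro at_within_Icc_at) auto
  ultimately show ?thesis by simp
qed

lemma integral_ge_const_mult:
  fixes g :: "real \<Rightarrow> real"
  assumes "g integrable_on {a..b}" "a \<le> b" "\<And>s. s \<in> {a..b} \<Longrightarrow> c \<le> g s"
  shows "c * (b - a) \<le> integral {a..b} g"
proof -
  have "integral {a..b} (\<lambda>_. c) \<le> integral {a..b} g"
    using assms by (intro integral_le) auto
  with assms(2) show ?thesis by (simp add: mult.commute)
qed

lemma superlinear_eventually_ge:
  fixes f :: "real \<Rightarrow> real"
  assumes "filterlim (\<lambda>x. f x / x) at_top at_top"
  shows "eventually (\<lambda>x. M * x \<le> f x) at_top"
  using filterlim_at_top_dense[THEN iffD1, OF assms, rule_format, of M]
    eventually_gt_at_top[of 0]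
  by eventually_elim (simp add: pos_less_divide_eq)

lemma superlinear_bounded_below:
  fixes f :: "real \<Rightarrow> real"
  assumes cont: "continuous_on {0<..} f" and pos: "\<forall>x>0. f x > 0"
    and superlin: "filterlim (\<lambda>x. f x / x) at_top at_top" and "a > 0"
  obtains m where "m > 0" "\<And>x. a \<le> x \<Longrightarrow> m \<le> f x"
proof -
  obtain X where X: "\<And>x. X \<le> x \<Longrightarrow> x \<le> f x"
    using superlinear_eventually_ge[OF superlin, of 1]
    by (auto simp: eventually_at_top_linorder)
  have "continuous_on {a..max a X} f"
    using \<open>a > 0\<close> by (intro continuous_on_subset[OF cont]) auto
  then obtain x0 where x0: "x0 \<in> {a..max a X}" "\<And>y. y \<in> {a..max a X} \<Longrightarrow> f x0 \<le> f y"
    using continuous_attains_inf[of "{a..max a X}" f] by auto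
  show thesis
  proof
    show "min (f x0) a > 0" using x0 pos \<open>a > 0\<close> by auto
    fix x assume "a \<le> x"
    then show "min (f x0) a \<le> f x"
    proof (cases "x \<le> max a X")
      case True
      then show ?thesis using x0(2)[of x] \<open>a \<le> x\<close> by auto
    next
      case False
      then have "x \<le> f x" using X by auto
      then show ?thesis using \<open>a \<le> x\<close> by linarith
    qed
  qed
qed

context
  fixes f :: "real \<Rightarrow> real"
  assumes f_cont: "continuous_on {0<..} f" and f_int: "f integrable_on {0..1}"
begin

lemma integrable_on_Icc_0: "f integrable_on {0..u}"
proof (cases "u \<le> 1")
  case True
  then show ?thesis by (intro integrable_on_subinterval[OF f_int]) auto
next
  case False
  have "f integrable_on {1..u}"
    by (intro integrable_continuous_interval continuous_on_subset[OF f_cont]) auto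
  with False f_int show ?thesis by (intro Henstock_Kurzweil_Integration.integrable_combine[of 0 1 u]) auto
qed

lemma integral_Icc_0_has_real_derivative:
  assumes "u > 0"
  shows "((\<lambda>y. integral {0..y} f) has_real_derivative f u) (at u)"
proof (rule has_field_derivative_transform_within_open)
  have "continuous_on {u/2..u+1} f"
    using assms by (intro continuous_on_subset[OF f_cont]) auto
  then have "((\<lambda>y. integral {u/2..y} f) has_real_derivative f u) (at u)"
    using assms by (intro integral_has_real_derivative_at) auto
  then show "((\<lambda>y. integral {0..u/2} f + integral {u/2..y} f) has_real_derivative f u) (at u)"
    using DERIV_add[OF DERIV_const] by simp
  show "integral {0..u/2} f + integral {u/2..y} f = integral {0..y} f" if "y \<in> {u/2<..}" for y
    using that assms integrable_on_Icc_0[of y] integrable_on_subinterval[OF integrable_on_Icc_0[of y], of "u/2" y]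
    by (intro Henstock_Kurzweil_Integration.integral_combine) auto
qed (use assms in auto)

lemma integral_Icc_0_ge:
  assumes pos: "\<forall>x>0. f x > 0" and "0 < a" "a \<le> u" and bound: "\<And>x. a \<le> x \<Longrightarrow> m \<le> f x"
  shows "m * (u - a) \<le> integral {0..u} f"
proof -
  have int: "f integrable_on {0..v}" "f integrable_on {a..v}" for v
    using integrable_on_Icc_0 integrable_on_subinterval[OF integrable_on_Icc_0[of v], of a v] \<open>0 < a\<close>
    by auto
  \<comment> \<open>\<open>f 0\<close> may be negative, hence the open interval\<close>
  have "0 \<le> integral {0<..<a} f"
    using int(1)[of a] pos by (intro integral_nonneg) (auto simp: integrable_on_Icc_iff_Ioo)
  also have "\<dots> = integral {0..a} f" by (simp add: integral_open_interval_real)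
  finally have "0 \<le> integral {0..a} f" .
  moreover have "m * (u - a) \<le> integral {a..u} f"
    using assms int by (intro integral_ge_const_mult) auto
  moreover have "integral {0..a} f + integral {a..u} f = integral {0..u} f"
    using assms int by (intro Henstock_Kurzweil_Integration.integral_combine) auto
  ultimately show ?thesis by linarith
qed

end

locale superlinear_delay_ode =
  fixes C \<delta> :: real and f z :: "real \<Rightarrow> real"
  assumes C_pos: "C > 0" and delta_pos: "\<delta> > 0"
    and f_cont: "continuous_on {0<..} f" and f_pos: "\<forall>x>0. f x > 0"
    and f_superlin: "filterlim (\<lambda>x. f x / x) at_top at_top"
    and z_cont: "continuous_on {-\<delta>..} z" and z_pos: "\<forall>t\<ge>-\<delta>. z t > 0"
    and z_ode: "\<forall>t\<ge>0. (z has_real_derivative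
                   C * integral {t-\<delta>..t} (\<lambda>s. f (z s))) (at t within {0..})"
begin

definition dz :: "real \<Rightarrow> real" where
  "dz t = C * integral {t-\<delta>..t} (\<lambda>s. f (z s))"

lemma fz_pos: "-\<delta> \<le> s \<Longrightarrow> f (z s) > 0"
  using f_pos z_pos by simp

lemma fz_integrable: "-\<delta> \<le> a \<Longrightarrow> (\<lambda>s. f (z s)) integrable_on {a..b}"
  by (intro integrable_continuous_interval continuous_on_subset[OF continuous_on_compose2[OF f_cont z_cont]])
     (use z_pos in auto)

lemma z_has_real_derivative:
  assumes "t > 0"
  shows "(z has_real_derivative dz t) (at t)"
proof -
  have "at t within {0..} = at t"
    using assms by (intro at_within_interior) auto
  moreover have "(z has_real_derivative dz t) (at t within {0..})"
    using z_ode assms by (simp add: dz_def)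
  ultimately show ?thesis by simp
qed

lemma dz_ge:
  assumes "0 \<le> u" "0 < a" "a \<le> \<delta>" and bound: "\<And>s. s \<in> {u-a..u} \<Longrightarrow> c \<le> f (z s)"
  shows "C * (c * a) \<le> dz u"
proof -
  have "c * a \<le> integral {u-a..u} (\<lambda>s. f (z s))"
    using integral_ge_const_mult[OF fz_integrable, of "u-a" u c] assms by simp
  also have "\<dots> \<le> integral {u-\<delta>..u} (\<lambda>s. f (z s))"
  proof (rule integral_subset_le)
    show "(\<lambda>s. f (z s)) integrable_on {u-a..u}" "(\<lambda>s. f (z s)) integrable_on {u-\<delta>..u}"
      using assms by (auto intro!: fz_integrable)
    show "\<forall>s \<in> {u-\<delta>..u}. 0 \<le> f (z s)"
      using assms fz_pos by (auto intro: less_imp_le)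
  qed (use assms in auto)
  finally show ?thesis unfolding dz_def using C_pos by simp
qed

lemma dz_nonneg: "0 \<le> u \<Longrightarrow> 0 \<le> dz u"
  using dz_ge[of u \<delta> 0] delta_pos fz_pos by (simp add: less_imp_le)

lemma z_mono:
  assumes "0 \<le> s" "s \<le> t"
  shows "z s \<le> z t"
proof (rule DERIV_nonneg_imp_increasing_open[OF \<open>s \<le> t\<close>])
  show "\<exists>y. (z has_real_derivative y) (at x) \<and> 0 \<le> y" if "s < x" for x
    using that assms z_has_real_derivative dz_nonneg by (intro exI[of _ "dz x"]) simp
  show "continuous_on {s..t} z"
    using assms delta_pos by (intro continuous_on_subset[OF z_cont]) auto
qed

lemma dz_ge_const: obtains K where "K > 0" "\<And>u. \<delta> \<le> u \<Longrightarrow> K \<le> dz u"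
proof -
  obtain m where m: "m > 0" "\<And>x. z 0 \<le> x \<Longrightarrow> m \<le> f x"
    using superlinear_bounded_below[OF f_cont f_pos f_superlin, of "z 0"] z_pos delta_pos by auto
  show thesis
  proof
    show "C * (m * \<delta>) > 0" using C_pos m delta_pos by simp
    show "C * (m * \<delta>) \<le> dz u" if "\<delta> \<le> u" for u
      using that delta_pos m z_mono by (intro dz_ge) auto
  qed
qed

lemma z_tendsto_at_top: "filterlim z at_top at_top"
proof -
  obtain K where K: "K > 0" "\<And>u. \<delta> \<le> u \<Longrightarrow> K \<le> dz u"
    using dz_ge_const by blast
  have lin: "z \<delta> - K * \<delta> + K * t \<le> z t" if t: "\<delta> < t" for t
  proof -
    obtain \<xi> where \<xi>: "\<delta> < \<xi>" "\<xi> < t" "z t - z \<delta> = (t - \<delta>) * dz \<xi>"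
      using MVT2[OF t, of z dz] z_has_real_derivative delta_pos by force
    then show ?thesis using K(2)[of \<xi>] mult_left_mono[of K "dz \<xi>" "t - \<delta>"] that
      by (simp add: algebra_simps)
  qed
  have "eventually (\<lambda>t. z \<delta> - K * \<delta> + K * t \<le> z t) at_top"
    by (intro eventually_mono[OF eventually_gt_at_top[of \<delta>]] lin)
  moreover have "filterlim (\<lambda>t. z \<delta> - K * \<delta> + K * t) at_top at_top"
    by (intro filterlim_tendsto_add_at_top[OF tendsto_const]
        filterlim_tendsto_pos_mult_at_top[OF tendsto_const \<open>K > 0\<close> filterlim_ident])
  ultimately show ?thesis by (rule filterlim_at_top_mono[rotated])
qed

lemma z_increment_ge:
  assumes a: "0 < a" "a \<le> \<delta>" "2 * a \<le> t" and "K \<ge> 0"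
    and superlin: "\<And>s. t - 2 * a \<le> s \<Longrightarrow> K * z s \<le> f (z s)"
  shows "C * a\<^sup>2 * K * z (t - 2 * a) \<le> z t - z (t - a)"
proof -
  obtain \<xi> where \<xi>: "t - a < \<xi>" "\<xi> < t" "z t - z (t - a) = a * dz \<xi>"
    using MVT2[of "t - a" t z dz] z_has_real_derivative a by force
  have "C * (K * z (t - 2 * a) * a) \<le> dz \<xi>"
  proof (rule dz_ge)
    fix s assume s: "s \<in> {\<xi> - a..\<xi>}"
    then have "z (t - 2 * a) \<le> z s" using \<xi> a by (intro z_mono) auto
    then have "K * z (t - 2 * a) \<le> K * z s" using \<open>K \<ge> 0\<close> by (rule mult_left_mono)
    also have "\<dots> \<le> f (z s)" using s \<xi> by (intro superlin) auto
    finally show "K * z (t - 2 * a) \<le> f (z s)" .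
  qed (use \<xi> a in auto)
  then have "a * (C * (K * z (t - 2 * a) * a)) \<le> a * dz \<xi>"
    using \<open>0 < a\<close> by (intro mult_left_mono) auto
  then show ?thesis using \<xi>(3) by (simp add: power2_eq_square algebra_simps)
qed

lemma eventually_z_ge_mult_shift:
  assumes "\<epsilon> > 0"
  shows "eventually (\<lambda>t. M * z (t - \<epsilon>) \<le> z t) at_top"
proof -
  define a where "a = min \<epsilon> \<delta> / 2"
  have a: "0 < a" "a \<le> \<delta>" "2 * a \<le> \<epsilon>"
    using assms delta_pos by (auto simp: a_def)
  define K where "K = \<bar>M\<bar> / (C * a\<^sup>2)"
  have "K \<ge> 0" "C * a\<^sup>2 * K = \<bar>M\<bar>"
    using C_pos a by (auto simp: K_def)
  obtain X where X: "\<And>x. X \<le> x \<Longrightarrow> K * x \<le> f x"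
    using superlinear_eventually_ge[OF f_superlin, of K] by (auto simp: eventually_at_top_linorder)
  obtain T where T: "\<And>t. T \<le> t \<Longrightarrow> X \<le> z t"
    using z_tendsto_at_top by (auto simp: filterlim_at_top eventually_at_top_linorder)
  have "M * z (t - \<epsilon>) \<le> z t" if t: "max T 0 + \<epsilon> \<le> t" for t
  proof -
    have t': "0 \<le> t - \<epsilon>" "t - \<epsilon> \<le> t - 2 * a" "T \<le> t - 2 * a"
      using t a by auto
    have "\<bar>M\<bar> * z (t - 2 * a) \<le> z t - z (t - a)"
      using z_increment_ge[OF a(1,2) _ \<open>K \<ge> 0\<close>, of t] X T t' \<open>C * a\<^sup>2 * K = \<bar>M\<bar>\<close> by auto
    moreover have "0 < z (t - a)" using z_pos t' a delta_pos by auto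
    moreover have "M * z (t - \<epsilon>) \<le> \<bar>M\<bar> * z (t - \<epsilon>)"
      using z_pos[rule_format, of "t - \<epsilon>"] t'(1) delta_pos by (intro mult_right_mono) auto
    moreover have "\<bar>M\<bar> * z (t - \<epsilon>) \<le> \<bar>M\<bar> * z (t - 2 * a)"
      using t' by (intro mult_left_mono z_mono) auto
    ultimately show ?thesis by linarith
  qed
  then show ?thesis by (intro eventually_mono[OF eventually_ge_at_top])
qed

lemma superexp_growth_z: "superexp_growth z"
  unfolding superexp_growth_def
proof (intro conjI allI impI)
  show "continuous_on {0<..} z"
    using delta_pos by (intro continuous_on_subset[OF z_cont]) auto
  show "z x > 0" if "x > 0" for x
    using that z_pos delta_pos by auto
  show "filterlim z at_top at_top" by (rule z_tendsto_at_top)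
  fix \<epsilon> :: real assume "\<epsilon> > 0"
  show "((\<lambda>x. z (x - \<epsilon>) / z x) \<longlongrightarrow> 0) at_top"
  proof (rule tendstoI)
    fix e :: real assume "e > 0"
    show "eventually (\<lambda>t. dist (z (t - \<epsilon>) / z t) 0 < e) at_top"
      using eventually_z_ge_mult_shift[OF \<open>\<epsilon> > 0\<close>, of "2 / e"] eventually_ge_at_top[of \<epsilon>]
    proof eventually_elim
      case (elim t)
      then have "0 < z (t - \<epsilon>)" "0 < z t"
        using z_pos delta_pos \<open>\<epsilon> > 0\<close> by auto
      with elim(1) \<open>e > 0\<close> show ?case
        by (simp add: field_simps)
    qed
  qed
qed

lemma dz_has_real_derivative:
  assumes "t > 0"
  shows "(dz has_real_derivative C * (f (z t) - f (z (t - \<delta>)))) (at t)"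
proof -
  define P where "P y = integral {-\<delta>..y} (\<lambda>s. f (z s))" for y
  have P: "(P has_real_derivative f (z y)) (at y)" if "-\<delta> < y" for y
    unfolding P_def
  proof (rule integral_has_real_derivative_at)
    show "continuous_on {-\<delta>..y+1} (\<lambda>s. f (z s))"
      using z_pos by (intro continuous_on_compose2[OF f_cont continuous_on_subset[OF z_cont]]) auto
  qed (use that in auto)
  have "((\<lambda>t. P (t - \<delta>)) has_real_derivative f (z (t - \<delta>))) (at t)"
    using DERIV_shift[of P "f (z (t - \<delta>))" t "-\<delta>"] P[of "t - \<delta>"] assms by simp
  then have "((\<lambda>t. C * (P t - P (t - \<delta>))) has_real_derivative C * (f (z t) - f (z (t - \<delta>)))) (at t)"
    using P[of t] assms delta_pos by (intro DERIV_cmult DERIV_diff) auto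
  then show ?thesis
  proof (rule has_field_derivative_transform_within_open[where S = "{0<..}"])
    show "C * (P u - P (u - \<delta>)) = dz u" if "u \<in> {0<..}" for u
    proof -
      have "integral {-\<delta>..u-\<delta>} (\<lambda>s. f (z s)) + integral {u-\<delta>..u} (\<lambda>s. f (z s)) = P u"
        unfolding P_def using that delta_pos
        by (intro Henstock_Kurzweil_Integration.integral_combine fz_integrable) auto
      then have "P u - P (u - \<delta>) = integral {u-\<delta>..u} (\<lambda>s. f (z s))"
        by (simp add: P_def)
      then show ?thesis by (simp add: dz_def)
    qed
  qed (use assms in auto)
qed

end

locale superlinear_delay_ode_vanishing_delay_ratio = superlinear_delay_ode +
  assumes f_int: "f integrable_on {0..1}"
    and f_z_ratio: "((\<lambda>t. f (z (t - \<delta>)) / f (z t)) \<longlongrightarrow> 0) at_top"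
begin

definition \<Phi> :: "real \<Rightarrow> real" where
  "\<Phi> u = integral {0..u} f"

lemma \<Phi>_has_real_derivative: "u > 0 \<Longrightarrow> (\<Phi> has_real_derivative f u) (at u)"
  unfolding \<Phi>_def[abs_def] by (rule integral_Icc_0_has_real_derivative[OF f_cont f_int])

lemma \<Phi>_ge_linear: obtains m where "m > 0" "\<And>u. 1/2 \<le> u \<Longrightarrow> m * (u - 1/2) \<le> \<Phi> u"
proof -
  obtain m where "m > 0" "\<And>x. 1/2 \<le> x \<Longrightarrow> m \<le> f x"
    using superlinear_bounded_below[OF f_cont f_pos f_superlin, of "1/2"] by auto
  then show thesis
    using integral_Icc_0_ge[OF f_cont f_int f_pos] that by (auto simp: \<Phi>_def)
qed

lemma \<Phi>_pos:
  assumes "1 \<le> u"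
  shows "\<Phi> u > 0"
proof -
  obtain m where m: "m > 0" "\<And>u. 1/2 \<le> u \<Longrightarrow> m * (u - 1/2) \<le> \<Phi> u"
    using \<Phi>_ge_linear by blast
  have "m * (u - 1/2) \<le> \<Phi> u" using m(2) assms by simp
  moreover have "0 < m * (u - 1/2)" using \<open>m > 0\<close> assms by simp
  ultimately show ?thesis by linarith
qed

lemma \<Phi>_tendsto_at_top: "filterlim \<Phi> at_top at_top"
proof -
  obtain m where m: "m > 0" "\<And>u. 1/2 \<le> u \<Longrightarrow> m * (u - 1/2) \<le> \<Phi> u"
    using \<Phi>_ge_linear by blast
  have "eventually (\<lambda>u. - m / 2 + m * u \<le> \<Phi> u) at_top"
    using m(2) by (intro eventually_mono[OF eventually_ge_at_top[of "1/2"]]) (simp add: algebra_simps)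
  moreover have "filterlim (\<lambda>u. - m / 2 + m * u) at_top at_top"
    by (intro filterlim_tendsto_add_at_top[OF tendsto_const]
        filterlim_tendsto_pos_mult_at_top[OF tendsto_const \<open>m > 0\<close> filterlim_ident])
  ultimately show ?thesis by (rule filterlim_at_top_mono[rotated])
qed

lemma eventually_ge_delay_and_z_ge_2: "eventually (\<lambda>t. \<delta> \<le> t \<and> 2 \<le> z t) at_top"
  using eventually_ge_at_top[of \<delta>] z_tendsto_at_top[unfolded filterlim_at_top, rule_format, of 2]
  by eventually_elim auto

lemma dz_pos: "\<delta> \<le> t \<Longrightarrow> dz t > 0"
  by (rule dz_ge_const) (meson less_le_trans)

lemma dz_sq_over_energy: "((\<lambda>t. (dz t)\<^sup>2 / (2 * C * \<Phi> (z t))) \<longlongrightarrow> 1) at_top"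
proof (rule lhospital_at_top_at_top[where f' = "\<lambda>t. 2 * dz t * (C * (f (z t) - f (z (t - \<delta>))))"
      and g' = "\<lambda>t. 2 * C * (f (z t) * dz t)"])
  show "filterlim (\<lambda>t. 2 * C * \<Phi> (z t)) at_top at_top"
    using C_pos by (intro filterlim_tendsto_pos_mult_at_top[OF tendsto_const]
        filterlim_compose[OF \<Phi>_tendsto_at_top z_tendsto_at_top]) auto
  show "eventually (\<lambda>t. 2 * C * (f (z t) * dz t) \<noteq> 0) at_top"
    using eventually_ge_delay_and_z_ge_2
  proof eventually_elim
    case (elim t)
    then have "f (z t) > 0" "dz t > 0" using f_pos dz_pos by auto
    then show ?case using C_pos by simp
  qed
  show "eventually (\<lambda>t. ((\<lambda>t. (dz t)\<^sup>2) has_real_derivative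
          2 * dz t * (C * (f (z t) - f (z (t - \<delta>))))) (at t)) at_top"
    using eventually_ge_delay_and_z_ge_2
  proof eventually_elim
    case (elim t)
    then show ?case
      using DERIV_power[OF dz_has_real_derivative, of t 2] delta_pos by (simp add: algebra_simps)
  qed
  show "eventually (\<lambda>t. ((\<lambda>t. 2 * C * \<Phi> (z t)) has_real_derivative
          2 * C * (f (z t) * dz t)) (at t)) at_top"
    using eventually_ge_delay_and_z_ge_2
  proof eventually_elim
    case (elim t)
    then show ?case using delta_pos
      by (intro DERIV_cmult DERIV_chain2[OF \<Phi>_has_real_derivative z_has_real_derivative]) auto
  qed
  have "((\<lambda>t. 1 - f (z (t - \<delta>)) / f (z t)) \<longlongrightarrow> 1 - 0) at_top"
    by (intro tendsto_diff tendsto_const f_z_ratio)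
  moreover have "eventually (\<lambda>t. 1 - f (z (t - \<delta>)) / f (z t) =
      2 * dz t * (C * (f (z t) - f (z (t - \<delta>)))) / (2 * C * (f (z t) * dz t))) at_top"
    using eventually_ge_delay_and_z_ge_2
  proof eventually_elim
    case (elim t)
    then have "f (z t) > 0" "dz t > 0" using f_pos dz_pos by auto
    then show ?case using C_pos by (simp add: field_simps)
  qed
  ultimately show "((\<lambda>t. 2 * dz t * (C * (f (z t) - f (z (t - \<delta>)))) / (2 * C * (f (z t) * dz t)))
      \<longlongrightarrow> 1) at_top"
    by (simp add: tendsto_cong)
qed

lemma dz_over_sqrt_energy: "((\<lambda>t. dz t / sqrt (\<Phi> (z t))) \<longlongrightarrow> sqrt (2 * C)) at_top"
proof -
  have "((\<lambda>t. sqrt (2 * C) * sqrt ((dz t)\<^sup>2 / (2 * C * \<Phi> (z t)))) \<longlongrightarrow> sqrt (2 * C) * sqrt 1) at_top"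
    by (intro tendsto_intros dz_sq_over_energy)
  moreover have "eventually (\<lambda>t. sqrt (2 * C) * sqrt ((dz t)\<^sup>2 / (2 * C * \<Phi> (z t)))
      = dz t / sqrt (\<Phi> (z t))) at_top"
    using eventually_ge_delay_and_z_ge_2
  proof eventually_elim
    case (elim t)
    then have "dz t > 0" "\<Phi> (z t) > 0" using dz_pos \<Phi>_pos by auto
    then show ?case using C_pos by (simp add: real_sqrt_divide real_sqrt_mult field_simps)
  qed
  ultimately show ?thesis by (simp add: tendsto_cong)
qed

lemma F_U_eq_integral_\<Phi>:
  "1 \<le> x \<Longrightarrow> F_U f x = integral {1..x} (\<lambda>u. 1 / sqrt (\<Phi> u))"
  by (simp add: F_U_def \<Phi>_def)

lemma F_U_z_over_t: "((\<lambda>t. F_U f (z t) / t) \<longlongrightarrow> sqrt (2 * C)) at_top"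
proof -
  define h where "h u = 1 / sqrt (\<Phi> u)" for u
  have h_cont: "continuous_on {1..b} h" for b
  proof -
    have "isCont \<Phi> u" if "u \<in> {1..b}" for u
      using that \<Phi>_has_real_derivative[of u] by (intro DERIV_isCont) auto
    then have "continuous_on {1..b} \<Phi>"
      by (rule continuous_at_imp_continuous_on[rule_format])
    moreover have "\<Phi> u \<noteq> 0" if "u \<in> {1..b}" for u
      using that \<Phi>_pos[of u] by simp
    ultimately show ?thesis
      unfolding h_def by (intro continuous_intros) auto
  qed
  have "((\<lambda>t. integral {1..z t} h / t) \<longlongrightarrow> sqrt (2 * C)) at_top"
  proof (rule lhospital_at_top_at_top[where f' = "\<lambda>t. h (z t) * dz t" and g' = "\<lambda>_. 1"])
    show "eventually (\<lambda>t. ((\<lambda>t. integral {1..z t} h) has_real_derivative h (z t) * dz t) (at t)) at_top"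
      using eventually_ge_delay_and_z_ge_2
    proof eventually_elim
      case (elim t)
      have "((\<lambda>y. integral {1..y} h) has_real_derivative h (z t)) (at (z t))"
        using elim by (intro integral_has_real_derivative_at[OF h_cont, of _ "z t + 1"]) auto
      moreover have "(z has_real_derivative dz t) (at t)"
        using elim delta_pos by (intro z_has_real_derivative) auto
      ultimately show ?case by (rule DERIV_chain2)
    qed
    show "((\<lambda>t. h (z t) * dz t / 1) \<longlongrightarrow> sqrt (2 * C)) at_top"
      using dz_over_sqrt_energy by (simp add: h_def)
  qed (simp_all add: filterlim_ident)
  moreover have "eventually (\<lambda>t. integral {1..z t} h / t = F_U f (z t) / t) at_top"
    using eventually_ge_delay_and_z_ge_2 by eventually_elim (simp add: F_U_eq_integral_\<Phi> h_def[abs_def])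
  ultimately show ?thesis by (simp add: tendsto_cong)
qed

end

theorem lemma6p5:
  fixes C \<delta> :: real and f \<psi> z :: "real \<Rightarrow> real"
  assumes C_pos: "C > 0" and delta_pos: "\<delta> > 0"
    and f_cont: "continuous_on {0<..} f" and f_pos: "\<forall>x>0. f x > 0"
    and f_int: "f integrable_on {0..1}"
    and f_asym: "asymp_increasing f"
    and f_superlin: "filterlim (\<lambda>x. f x / x) at_top at_top"
    and psi_cont: "continuous_on {-\<delta>..0} \<psi>" and psi_pos: "\<forall>t\<in>{-\<delta>..0}. \<psi> t > 0"
    and f_pres: "preserves_superexp f"
    and z_cont: "continuous_on {-\<delta>..} z" and z_pos: "\<forall>t\<ge>-\<delta>. z t > 0"
    and z_init: "\<forall>t\<in>{-\<delta>..0}. z t = \<psi> t"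
    and z_ode: "\<forall>t\<ge>0. (z has_real_derivative
                   C * integral {t-\<delta>..t} (\<lambda>s. f (z s))) (at t within {0..})"
  shows "((\<lambda>t. F_U f (z t) / t) \<longlongrightarrow> sqrt (2 * C)) at_top"
proof -
  interpret superlinear_delay_ode C \<delta> f z
    by unfold_locales (fact C_pos delta_pos f_cont f_pos f_superlin z_cont z_pos z_ode)+
  have ratio: "((\<lambda>t. f (z (t - \<delta>)) / f (z t)) \<longlongrightarrow> 0) at_top"
    using f_pres superexp_growth_z delta_pos unfolding preserves_superexp_def by blast
  interpret superlinear_delay_ode_vanishing_delay_ratio C \<delta> f z
    by unfold_locales (fact f_int ratio)+
  show ?thesis by (rule F_U_z_over_t)
qed

end
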